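(* Let $D_\infty=\langle s,t\mid t^2,\ tsts\rangle$, let $\alpha,\beta$ be minimal continuous actions of $D_\infty$ on an infinite compact Hausdorff space $X$ that are continuously orbit equivalent via a homeomorphism $\phi$ with continuous orbit cocycle $c:D_\infty\times X\to D_\infty$ (so $\phi(\alpha_g x)=\beta_{c(g,x)}\phi(x)$), and suppose the restricted action of the subgroup $\langle s\rangle\cong\mathbb{Z}$ under $\alpha$ is minimal. Then there exist a continuous map $L':X\to D_\infty$ and $k\in\mathbb{Z}$ such that $c(g,x)=L'(\alpha_g x)^{-1}\phi_k(g)L'(x)$ for all $g\in D_\infty$, $x\in X$, where $\phi_k$ is the automorphism of $D_\infty$ with $\phi_k(s)=s$, $\phi_k(t)=s^kt$. *)

theory Defs
  imports "HOL-Analysis.Analysis"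
begin

text \<open>The infinite dihedral group D_inf = < s, t | t^2, tsts >.
  Every element has a unique normal form s^n t^e with n an integer and e a boolean
  (e = True meaning one factor t).
  The relations give t s^m = s^(-m) t.\<close>

datatype dinf = D int bool

fun dmul :: "dinf \<Rightarrow> dinf \<Rightarrow> dinf" where
  "dmul (D n e) (D m f) = D (n + (if e then - m else m)) (e \<noteq> f)"

definition dunit :: dinf where "dunit = D 0 False"

fun dinv :: "dinf \<Rightarrow> dinf" where
  "dinv (D n e) = (if e then D n True else D (- n) False)"

definition ds :: dinf where "ds = D 1 False"
definition dt :: dinf where "dt = D 0 True"

text \<open>phi_k: the automorphism with phi_k(s) = s and phi_k(t) = s^k t,
  so phi_k(s^n t^e) = s^n (s^k t)^e.\<close>
fun phik :: "int \<Rightarrow> dinf \<Rightarrow> dinf" where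
  "phik k (D n e) = D (n + (if e then k else 0)) e"

definition sgrp :: "dinf set" where "sgrp = {D n False | n. True}"

definition cont_action :: "(dinf \<Rightarrow> 'x::topological_space \<Rightarrow> 'x) \<Rightarrow> bool" where
  "cont_action a \<longleftrightarrow> (\<forall>x. a dunit x = x) \<and> (\<forall>g h x. a (dmul g h) x = a g (a h x))
     \<and> (\<forall>g. continuous_on UNIV (a g))"

definition minimal_on :: "dinf set \<Rightarrow> (dinf \<Rightarrow> 'x::topological_space \<Rightarrow> 'x) \<Rightarrow> bool" where
  "minimal_on H a \<longleftrightarrow> (\<forall>x. closure {a g x | g. g \<in> H} = UNIV)"

abbreviation minimal_action :: "(dinf \<Rightarrow> 'x::topological_space \<Rightarrow> 'x) \<Rightarrow> bool" where
  "minimal_action a \<equiv> minimal_on UNIV a"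

text \<open>Continuity of a map X \<rightarrow> D_inf (D_inf discrete): all fibres are open.\<close>
definition cont_to_dinf :: "('x::topological_space \<Rightarrow> dinf) \<Rightarrow> bool" where
  "cont_to_dinf f \<longleftrightarrow> (\<forall>h. open {x. f x = h})"

text \<open>Continuity of a map D_inf \<times> X \<rightarrow> D_inf (D_inf discrete, product topology).\<close>
definition cont_cocycle :: "(dinf \<Rightarrow> 'x::topological_space \<Rightarrow> dinf) \<Rightarrow> bool" where
  "cont_cocycle c \<longleftrightarrow> (\<forall>g. cont_to_dinf (c g))"

definition coe_via :: "(dinf \<Rightarrow> 'x::topological_space \<Rightarrow> 'x) \<Rightarrow> (dinf \<Rightarrow> 'x \<Rightarrow> 'x)
    \<Rightarrow> ('x \<Rightarrow> 'x) \<Rightarrow> (dinf \<Rightarrow> 'x \<Rightarrow> dinf) \<Rightarrow> bool" where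
  "coe_via a b \<phi> c \<longleftrightarrow> homeomorphism UNIV UNIV \<phi> (inv \<phi>)
     \<and> cont_cocycle c \<and> (\<forall>g x. \<phi> (a g x) = b (c g x) (\<phi> x))
     \<and> (\<exists>c'. cont_cocycle c' \<and> (\<forall>g y. inv \<phi> (b g y) = a (c' g y) (inv \<phi> y)))"

end

(* D_inf acts simply transitively on the integers by isometries, s as the translation by 2
   and t as the reflection j -> -1 - j, so D_inf can be identified with the integers.  For
   fixed x the cocycle g -> c(g, x) then becomes a bijection P_x of the integers; compactness
   and the continuous inverse cocycle make it a quasi-isometry with constants independent of
   x, so outside a uniform window it either preserves or swaps the two ends.  Composing with
   a suitable element L(x) of D_inf normalizes P_x to an end preserving bijection whose index
   (the net number of points moved from the nonnegative to the negative half) is 0 or 1;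
   L(x) is read off a finite window, hence locally constant in x.  The cocycle identity says
   that the normalized maps at x and at g x differ by composing with isometries on both
   sides, and comparing indices forces L(g x) c(g, x) L(x)^-1 = phi_k(g) with k = - index.
   Topological freeness of minimal actions on infinite compact spaces supplies the cocycle
   identities, and k, being locally constant and invariant, is constant by minimality. *)

theory Submission
  imports Defs
begin

section \<open>The infinite dihedral group acting on the integers\<close>

lemma dmul_assoc: "dmul (dmul a b) c = dmul a (dmul b c)"
  by (cases a; cases b; cases c) auto

lemma dmul_dunit_left [simp]: "dmul dunit a = a"
  by (cases a) (auto simp: dunit_def)

lemma dmul_dunit_right [simp]: "dmul a dunit = a"
  by (cases a) (auto simp: dunit_def)

lemma dmul_dinv_left [simp]: "dmul (dinv a) a = dunit"
  by (cases a) (auto simp: dunit_def)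

lemma dmul_dinv_right [simp]: "dmul a (dinv a) = dunit"
  by (cases a) (auto simp: dunit_def)

lemma dinv_dinv [simp]: "dinv (dinv a) = a"
  by (cases a) auto

lemma dinv_dmul: "dinv (dmul a b) = dmul (dinv b) (dinv a)"
  by (cases a; cases b) auto

lemma dmul_dinv_cancel_left [simp]: "dmul (dinv a) (dmul a b) = b"
  by (simp flip: dmul_assoc)

lemma dmul_idem_iff: "dmul u u = u \<longleftrightarrow> u = dunit"
  by (metis dmul_dinv_cancel_left dmul_dunit_right)

lemma dmul_conj_eq_iff: "dmul u (dmul v (dinv w)) = z \<longleftrightarrow> v = dmul (dinv u) (dmul z w)"
  by (metis dinv_dinv dinv_dmul dmul_assoc dmul_dinv_cancel_left)

text \<open>\<open>D m e\<close> acts as \<open>j \<mapsto> 2 m + j\<close> or \<open>j \<mapsto> 2 m - 1 - j\<close>; the action is simply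
  transitive, and \<open>zindex h\<close>, the image of 0 under \<open>h\<^sup>-\<^sup>1\<close>, identifies \<open>D\<^sub>\<infinity>\<close> with \<open>\<int>\<close>.\<close>
fun zmap :: "dinf \<Rightarrow> int \<Rightarrow> int" where
  "zmap (D m e) j = (if e then 2 * m - 1 - j else j + 2 * m)"

definition zflip :: "int \<Rightarrow> int" where
  "zflip j = - 1 - j"

lemma zmap_D: "zmap (D m e) = (+) (2 * m) \<circ> (if e then zflip else id)"
  by (auto simp: zflip_def fun_eq_iff)

lemma zmap_dmul: "zmap (dmul a b) = zmap a \<circ> zmap b"
  by (cases a; cases b) (auto simp: fun_eq_iff)

lemma zmap_dunit: "zmap dunit = id"
  by (auto simp: dunit_def fun_eq_iff)

lemma zmap_dinv_comp: "zmap (dinv a) \<circ> (zmap a \<circ> F) = F"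
  by (metis comp_assoc dmul_dinv_left zmap_dmul zmap_dunit id_comp)

lemma zmap_dist: "\<bar>zmap g i - zmap g j\<bar> = \<bar>i - j\<bar>"
  by (cases g) auto

lemma zflip_zflip: "zflip \<circ> zflip = id"
  by (auto simp: zflip_def)

lemma bij_zflip: "bij zflip"
  using o_bij zflip_zflip by blast

definition zindex :: "dinf \<Rightarrow> int" where
  "zindex h = zmap (dinv h) 0"

definition of_zindex :: "int \<Rightarrow> dinf" where
  "of_zindex j = (if even j then D (- (j div 2)) False else D ((j + 1) div 2) True)"

lemma zindex_of_zindex [simp]: "zindex (of_zindex j) = j"
  by (auto simp: zindex_def of_zindex_def elim!: evenE oddE)

lemma of_zindex_zindex [simp]: "of_zindex (zindex h) = h"
  by (cases h) (auto simp: zindex_def of_zindex_def)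

lemma zindex_dmul: "zindex (dmul h g) = zmap (dinv g) (zindex h)"
  by (simp add: zindex_def dinv_dmul zmap_dmul)

lemma zindex_dmul_dist: "\<bar>zindex (dmul u v) - zindex v\<bar> = \<bar>zindex u\<bar>"
  using zmap_dist [of "dinv v" "zindex u" 0] unfolding zindex_dmul by (simp add: zindex_def)

lemma of_zindex_0: "of_zindex 0 = dunit"
  by (simp add: of_zindex_def dunit_def)

lemma of_zindex_succ: "\<exists>r \<in> {dt, D 1 True}. of_zindex (j + 1) = dmul r (of_zindex j)"
  by (auto simp: of_zindex_def dt_def elim!: evenE oddE)

section \<open>Ends of bijections of the integers\<close>

definition almost_eq :: "'a set \<Rightarrow> 'a set \<Rightarrow> bool" where
  "almost_eq U V \<longleftrightarrow> finite (U - V) \<and> finite (V - U)"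

definition card_excess :: "'a set \<Rightarrow> 'a set \<Rightarrow> int" where
  "card_excess U V = int (card (U - V)) - int (card (V - U))"

lemma almost_eq_sym: "almost_eq U V \<Longrightarrow> almost_eq V U"
  by (simp add: almost_eq_def)

lemma almost_eq_trans:
  assumes "almost_eq U V" "almost_eq V W"
  shows "almost_eq U W"
proof -
  have "U - W \<subseteq> (U - V) \<union> (V - W)" "W - U \<subseteq> (W - V) \<union> (V - U)" by auto
  with assms show ?thesis
    unfolding almost_eq_def by (meson finite_UnI finite_subset)
qed

lemma almost_eq_Compl: "almost_eq U V \<Longrightarrow> almost_eq (- U) (- V)"
  unfolding almost_eq_def by (simp add: Diff_eq Int_commute)

lemma almost_eq_vimage: "inj f \<Longrightarrow> almost_eq U V \<Longrightarrow> almost_eq (f -` U) (f -` V)"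
  unfolding almost_eq_def by (metis finite_vimageI vimage_Diff)

lemma card_excess_eq_card_Int:
  assumes "finite F" "U - V \<subseteq> F" "V - U \<subseteq> F"
  shows "card_excess U V = int (card (U \<inter> F)) - int (card (V \<inter> F))"
proof -
  have "card (U \<inter> F) = card (U \<inter> V \<inter> F) + card (U - V)"
    "card (V \<inter> F) = card (U \<inter> V \<inter> F) + card (V - U)"
    using assms by (subst card_Un_disjoint [symmetric]; auto intro: finite_subset arg_cong [where f = card])+
  then show ?thesis by (simp add: card_excess_def)
qed

lemma card_excess_trans:
  assumes "almost_eq U V" "almost_eq V W"
  shows "card_excess U W = card_excess U V + card_excess V W"
proof -
  define F where "F = (U - V) \<union> (V - U) \<union> (V - W) \<union> (W - V)"
  have "finite F" using assms unfolding F_def almost_eq_def by auto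
  moreover have "U - V \<subseteq> F" "V - U \<subseteq> F" "V - W \<subseteq> F" "W - V \<subseteq> F" "U - W \<subseteq> F" "W - U \<subseteq> F"
    unfolding F_def by auto
  ultimately show ?thesis
    by (simp add: card_excess_eq_card_Int [of F])
qed

lemma card_excess_vimage: "bij f \<Longrightarrow> card_excess (f -` U) (f -` V) = card_excess U V"
  unfolding card_excess_def by (metis bij_is_inj bij_is_surj card_vimage_inj top_greatest vimage_Diff)

lemma card_excess_Compl: "card_excess (- U) (- V) = - card_excess U V"
  unfolding card_excess_def by (simp add: Diff_eq Int_commute)

definition preserves_ends :: "(int \<Rightarrow> int) \<Rightarrow> bool" where
  "preserves_ends P \<longleftrightarrow> almost_eq {0..} (P -` {0..})"

definition end_index :: "(int \<Rightarrow> int) \<Rightarrow> int" where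
  "end_index P = card_excess {0..} (P -` {0..})"

lemma
  assumes "preserves_ends P" "preserves_ends Q" "bij Q"
  shows preserves_ends_comp: "preserves_ends (P \<circ> Q)"
    and end_index_comp: "end_index (P \<circ> Q) = end_index P + end_index Q"
proof -
  have "almost_eq (Q -` {0..}) (Q -` P -` {0..})"
    using assms by (simp add: almost_eq_vimage bij_is_inj preserves_ends_def)
  with assms show "preserves_ends (P \<circ> Q)" "end_index (P \<circ> Q) = end_index P + end_index Q"
    unfolding preserves_ends_def end_index_def vimage_comp [symmetric]
    by (auto simp: card_excess_trans card_excess_vimage intro: almost_eq_trans)
qed

lemma
  fixes a :: int
  shows preserves_ends_plus: "preserves_ends ((+) a)"
    and end_index_plus: "end_index ((+) a) = - a"
proof -
  have "(+) a -` {0..} = {-a..}" by auto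
  moreover have "{0..} - {-a..} = (if a < 0 then {0..<-a} else {})"
    "{-a..} - {0..} = (if a < 0 then {} else {-a..<0})" by auto
  ultimately show "preserves_ends ((+) a)" "end_index ((+) a) = - a"
    unfolding preserves_ends_def end_index_def almost_eq_def card_excess_def by auto
qed

lemma
  assumes "preserves_ends P"
  shows preserves_ends_zflip_conj: "preserves_ends (zflip \<circ> P \<circ> zflip)"
    and end_index_zflip_conj: "end_index (zflip \<circ> P \<circ> zflip) = - end_index P"
proof -
  have zflip: "{0..} = zflip -` (- {0..})"
    by (auto simp: zflip_def)
  have conj: "(zflip \<circ> P \<circ> zflip) -` {0..} = zflip -` (- (P -` {0..}))"
    by (auto simp: zflip_def)
  have "almost_eq (zflip -` (- {0..})) (zflip -` (- (P -` {0..})))"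
    using assms unfolding preserves_ends_def by (intro almost_eq_vimage almost_eq_Compl bij_is_inj bij_zflip)
  then show "preserves_ends (zflip \<circ> P \<circ> zflip)"
    unfolding preserves_ends_def conj by (subst zflip)
  have "end_index (zflip \<circ> P \<circ> zflip) = card_excess (zflip -` (- {0..})) (zflip -` (- (P -` {0..})))"
    unfolding end_index_def conj by (subst zflip) (rule refl)
  also have "\<dots> = - end_index P"
    by (simp only: card_excess_vimage [OF bij_zflip] card_excess_Compl end_index_def)
  finally show "end_index (zflip \<circ> P \<circ> zflip) = - end_index P" .
qed

lemma not_almost_eq_nonneg_neg: "\<not> almost_eq {0::int..} (- {0..})"
proof -
  have "{0::int..} - - {0..} = {0..}" by auto
  then show ?thesis unfolding almost_eq_def using infinite_Ici by metis
qed

lemma not_preserves_ends_zflip_comp: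
  assumes "preserves_ends P"
  shows "\<not> preserves_ends (zflip \<circ> P)"
proof
  assume "preserves_ends (zflip \<circ> P)"
  moreover have "(zflip \<circ> P) -` {0..} = - (P -` {0..})"
    by (auto simp: zflip_def)
  ultimately have "almost_eq {0..} (- (P -` {0..}))"
    by (simp add: preserves_ends_def)
  moreover have "almost_eq (- (P -` {0..})) (- {0..})"
    using assms unfolding preserves_ends_def by (intro almost_eq_Compl) (rule almost_eq_sym)
  ultimately show False
    using almost_eq_trans not_almost_eq_nonneg_neg by blast
qed

lemma not_preserves_ends_comp_zflip:
  assumes "preserves_ends P"
  shows "\<not> preserves_ends (P \<circ> zflip)"
proof
  assume "preserves_ends (P \<circ> zflip)"
  then have "almost_eq {0..} (zflip -` P -` {0..})"
    by (simp add: preserves_ends_def vimage_comp)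
  moreover have "almost_eq (zflip -` P -` {0..}) (zflip -` {0..})"
    using assms by (simp add: almost_eq_sym almost_eq_vimage bij_is_inj bij_zflip preserves_ends_def)
  moreover have "zflip -` {0..} = - {0..}"
    by (auto simp: zflip_def)
  ultimately show False
    using almost_eq_trans not_almost_eq_nonneg_neg by metis
qed

lemma end_index_zmap_conj:
  assumes "bij R" "preserves_ends R"
  shows "end_index (zmap (D m e) \<circ> R \<circ> zmap (D a e)) =
    (if e then 2 * a - 2 * m - end_index R else end_index R - 2 * m - 2 * a)"
proof -
  define R' where "R' = (if e then zflip \<circ> R \<circ> zflip else R)"
  define a' where "a' = (if e then - 2 * a else 2 * a)"
  have eq: "zmap (D m e) \<circ> R \<circ> zmap (D a e) = (+) (2 * m) \<circ> (R' \<circ> (+) a')"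
    by (auto simp: R'_def a'_def zmap_D zflip_def fun_eq_iff intro!: arg_cong [where f = R])
  have "bij R'" using assms(1) by (simp add: R'_def bij_comp bij_zflip)
  then have "bij (R' \<circ> (+) a')" by (simp add: bij_comp bij_plus)
  moreover have R': "preserves_ends R'" "end_index R' = (if e then - end_index R else end_index R)"
    using assms by (auto simp: R'_def preserves_ends_zflip_conj end_index_zflip_conj)
  ultimately show ?thesis
    unfolding eq using bij_plus
    by (auto simp: a'_def preserves_ends_comp end_index_comp preserves_ends_plus end_index_plus)
qed

lemma not_preserves_ends_zmap_conj:
  assumes "bij R" "preserves_ends R" "f \<noteq> e"
  shows "\<not> preserves_ends (zmap (D m f) \<circ> R \<circ> zmap (D a e))"
proof
  assume pres: "preserves_ends (zmap (D m f) \<circ> R \<circ> zmap (D a e))"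
  have shifted: "preserves_ends ((+) (2 * m) \<circ> R \<circ> (+) (2 * a))"
    using assms by (simp add: preserves_ends_comp preserves_ends_plus bij_comp bij_plus comp_assoc)
  show False
  proof (cases e)
    case True
    with assms pres have "preserves_ends (((+) (2 * m) \<circ> R \<circ> (+) (2 * a)) \<circ> zflip)"
      by (simp add: zmap_D comp_assoc)
    with shifted show False by (simp add: not_preserves_ends_comp_zflip)
  next
    case False
    with assms pres have "preserves_ends ((+) (2 * m) \<circ> (zflip \<circ> (R \<circ> (+) (2 * a))))"
      by (simp add: zmap_D comp_assoc)
    then have "preserves_ends ((+) (- 2 * m) \<circ> ((+) (2 * m) \<circ> (zflip \<circ> (R \<circ> (+) (2 * a)))))"
      using assms(1) by (simp add: preserves_ends_comp preserves_ends_plus bij_comp bij_plus bij_zflip)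
    then have "preserves_ends (zflip \<circ> (R \<circ> (+) (2 * a)))"
      by (simp add: comp_def)
    moreover have "preserves_ends (R \<circ> (+) (2 * a))"
      using assms by (simp add: preserves_ends_comp preserves_ends_plus bij_plus)
    ultimately show False by (simp add: not_preserves_ends_zflip_comp)
  qed
qed

definition normalized :: "(int \<Rightarrow> int) \<Rightarrow> bool" where
  "normalized R \<longleftrightarrow> bij R \<and> preserves_ends R \<and> end_index R \<in> {0, 1}"

text \<open>This rigidity is what produces the automorphism \<open>phik\<close> of the theorem.\<close>
lemma normalized_zmap_conj:
  assumes "normalized R" "normalized (zmap \<kappa> \<circ> R \<circ> zmap h)"
  shows "\<kappa> = phik (- end_index R) (dinv h)" "end_index (zmap \<kappa> \<circ> R \<circ> zmap h) = end_index R"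
proof -
  obtain a e where h: "h = D a e" by (cases h)
  obtain m f where \<kappa>: "\<kappa> = D m f" by (cases \<kappa>)
  have "f = e"
  proof (rule ccontr)
    assume "f \<noteq> e"
    with assms show False
      using not_preserves_ends_zmap_conj [of R f e m a] by (simp add: normalized_def h \<kappa>)
  qed
  define i i' where "i = end_index R" and "i' = end_index (zmap \<kappa> \<circ> R \<circ> zmap h)"
  have i': "i' = (if e then 2 * a - 2 * m - i else i - 2 * m - 2 * a)"
    using assms by (simp add: i_def i'_def h \<kappa> \<open>f = e\<close> end_index_zmap_conj normalized_def)
  have "i \<in> {0, 1}" "i' \<in> {0, 1}"
    using assms by (simp_all add: i_def i'_def normalized_def)
  with i' have "i' = i \<and> m = (if e then a - i else - a)"
    by (cases e) (auto; presburger)+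
  then show "\<kappa> = phik (- i) (dinv h)" "i' = i"
    by (simp_all add: h \<kappa> \<open>f = e\<close>)
qed

definition sign_pattern :: "int \<Rightarrow> (int \<Rightarrow> int) \<Rightarrow> bool" where
  "sign_pattern K P \<longleftrightarrow> (\<forall>j > K. 0 \<le> P j) \<and> (\<forall>j < - K. P j < 0)"

definition window_index :: "int \<Rightarrow> (int \<Rightarrow> int) \<Rightarrow> int" where
  "window_index K P = int (card {j \<in> {0..K}. P j < 0}) - int (card {j \<in> {- K..- 1}. 0 \<le> P j})"

lemma
  assumes "sign_pattern K P"
  shows preserves_ends_if_sign_pattern: "preserves_ends P"
    and end_index_eq_window_index: "end_index P = window_index K P"
proof -
  have "{0..} - P -` {0..} = {j \<in> {0..K}. P j < 0}" "P -` {0..} - {0..} = {j \<in> {- K..- 1}. 0 \<le> P j}"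
    using assms unfolding sign_pattern_def by (auto simp: not_le not_less)
  moreover have "finite {j \<in> {0..K}. P j < 0}" "finite {j \<in> {- K..- 1}. 0 \<le> P j}"
    by (auto intro: finite_subset [of _ "{0..K}"] finite_subset [of _ "{- K..- 1}"])
  ultimately show "preserves_ends P" "end_index P = window_index K P"
    unfolding preserves_ends_def end_index_def almost_eq_def card_excess_def window_index_def
    by simp_all
qed

text \<open>The normalizer depends only on \<open>P\<close> restricted to \<open>{-K..K+1}\<close>; this is what makes the
  normalizing map of the main argument locally constant.\<close>
definition normalizer :: "int \<Rightarrow> (int \<Rightarrow> int) \<Rightarrow> dinf" where
  "normalizer K P = (if 0 \<le> P (K + 1) then D (window_index K P div 2) False
                     else D (window_index K (zflip \<circ> P) div 2) True)"

lemma normalized_normalizer: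
  assumes "bij P" and pattern: "sign_pattern K P \<or> sign_pattern K (zflip \<circ> P)"
  shows "normalized (zmap (normalizer K P) \<circ> P)"
proof -
  define P' where "P' = (if 0 \<le> P (K + 1) then P else zflip \<circ> P)"
  define w where "w = window_index K P'"
  have "P (K + 1) < 0" if "sign_pattern K (zflip \<circ> P)"
  proof -
    from that have "0 \<le> (zflip \<circ> P) (K + 1)"
      unfolding sign_pattern_def by simp
    then show ?thesis by (simp add: zflip_def)
  qed
  with pattern have "sign_pattern K P'"
    by (auto simp: P'_def sign_pattern_def zflip_def)
  then have P': "preserves_ends P'" "end_index P' = w"
    by (simp_all add: w_def preserves_ends_if_sign_pattern end_index_eq_window_index)
  have "bij P'"
    using assms by (simp add: P'_def bij_comp bij_zflip)
  moreover have "zmap (normalizer K P) \<circ> P = (+) (2 * (w div 2)) \<circ> P'"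
    by (simp add: normalizer_def P'_def w_def zmap_D comp_assoc)
  ultimately show ?thesis
    using P' bij_plus
    by (simp add: normalized_def bij_comp preserves_ends_comp preserves_ends_plus end_index_comp
        end_index_plus minus_div_mult_eq_mod [symmetric]) presburger
qed

lemma window_index_cong:
  assumes "\<forall>j \<in> {- K..K}. P j = P' j"
  shows "window_index K P = window_index K P'"
proof -
  have "{j \<in> {0..K}. P j < 0} = {j \<in> {0..K}. P' j < 0}"
    "{j \<in> {- K..- 1}. 0 \<le> P j} = {j \<in> {- K..- 1}. 0 \<le> P' j}"
    using assms by auto
  then show ?thesis
    by (simp add: window_index_def)
qed

lemma normalizer_cong:
  assumes "0 \<le> K" "\<forall>j \<in> {- K..K + 1}. P j = P' j"
  shows "normalizer K P = normalizer K P'"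
proof -
  have "window_index K P = window_index K P'" "window_index K (zflip \<circ> P) = window_index K (zflip \<circ> P')"
    using assms by (auto intro!: window_index_cong)
  moreover have "P (K + 1) = P' (K + 1)"
    using assms by simp
  ultimately show ?thesis
    by (simp add: normalizer_def)
qed

section \<open>Quasi-isometries of the integers\<close>

definition coarse_lipschitz :: "int \<Rightarrow> (int \<Rightarrow> int) \<Rightarrow> bool" where
  "coarse_lipschitz M P \<longleftrightarrow> (\<forall>j. \<bar>P (j + 1) - P j\<bar> \<le> M)"

definition coarse_bij :: "int \<Rightarrow> (int \<Rightarrow> int) \<Rightarrow> bool" where
  "coarse_bij M P \<longleftrightarrow> bij P \<and> coarse_lipschitz M P \<and> coarse_lipschitz M (inv P)"

lemma coarse_lipschitz_nonneg: "coarse_lipschitz M P \<Longrightarrow> 0 \<le> M"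
  unfolding coarse_lipschitz_def by (meson abs_ge_zero order_trans)

lemma coarse_lipschitz_mono: "coarse_lipschitz M P \<Longrightarrow> M \<le> M' \<Longrightarrow> coarse_lipschitz M' P"
  unfolding coarse_lipschitz_def by (meson order_trans)

lemma coarse_lipschitz_dist:
  assumes "coarse_lipschitz M P"
  shows "\<bar>P a - P b\<bar> \<le> M * \<bar>a - b\<bar>"
proof -
  have "\<bar>P (b + int d) - P b\<bar> \<le> M * int d" for b d
  proof (induction d)
    case (Suc d)
    have "\<bar>P (b + int d + 1) - P (b + int d)\<bar> \<le> M"
      using assms by (simp add: coarse_lipschitz_def)
    with Suc show ?case by (simp add: algebra_simps)
  qed simp
  from this [of "min a b" "nat \<bar>a - b\<bar>"] show ?thesis
    by (cases "a \<le> b") (simp_all add: abs_minus_commute)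
qed

lemma coarse_lipschitz_reflect: "coarse_lipschitz M P \<Longrightarrow> coarse_lipschitz M (\<lambda>j. P (- j))"
  unfolding coarse_lipschitz_def by (metis abs_minus_commute diff_add_cancel minus_diff_eq uminus_add_conv_diff)

lemma coarse_lipschitz_sign_persists:
  assumes "coarse_lipschitz M P" "\<And>j. j0 \<le> j \<Longrightarrow> M < \<bar>P j\<bar>" "j0 \<le> j"
  shows "0 < P j \<longleftrightarrow> 0 < P j0"
proof -
  have "0 < P (j0 + int d) \<longleftrightarrow> 0 < P j0" for d
  proof (induction d)
    case (Suc d)
    define i where "i = j0 + int d"
    have "\<bar>P (i + 1) - P i\<bar> \<le> M"
      using assms(1) by (simp add: coarse_lipschitz_def)
    moreover have "M < \<bar>P i\<bar>" "M < \<bar>P (i + 1)\<bar>"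
      using assms(2) by (simp_all add: i_def)
    ultimately have "0 < P (i + 1) \<longleftrightarrow> 0 < P i"
      by linarith
    moreover have "j0 + int (Suc d) = i + 1"
      by (simp add: i_def)
    ultimately show ?case
      using Suc by (metis i_def)
  qed simp
  from this [of "nat (j - j0)"] assms(3) show ?thesis
    by simp
qed

lemma finite_Compl_if_surj_tails:
  fixes P :: "int \<Rightarrow> int"
  assumes "surj P" "\<And>j. K < \<bar>j\<bar> \<Longrightarrow> P j \<in> S"
  shows "finite (- S)"
proof -
  have "- S \<subseteq> P ` {- K..K}"
  proof
    fix i assume "i \<in> - S"
    moreover obtain j where "i = P j" using assms(1) by (metis surjD)
    ultimately show "i \<in> P ` {- K..K}"
      using assms(2) [of j] by force
  qed
  then show ?thesis by (rule finite_surj [rotated]) simp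
qed

lemma coarse_bij_sign_pattern:
  assumes "coarse_bij M P" "P 0 = 0"
  shows "sign_pattern (M * M) P \<or> sign_pattern (M * M) (zflip \<circ> P)"
proof -
  define K where "K = M * M"
  have lip: "coarse_lipschitz M P" "coarse_lipschitz M (inv P)" and "bij P"
    using assms(1) by (simp_all add: coarse_bij_def)
  then have "0 \<le> M" by (simp add: coarse_lipschitz_nonneg)
  have far: "M < \<bar>P j\<bar>" if "K < \<bar>j\<bar>" for j
  proof (rule ccontr)
    assume "\<not> M < \<bar>P j\<bar>"
    moreover have "\<bar>inv P (P j) - inv P (P 0)\<bar> \<le> M * \<bar>P j - P 0\<bar>"
      using lip(2) by (rule coarse_lipschitz_dist)
    moreover have "inv P (P j) = j" "inv P (P 0) = 0"
      using \<open>bij P\<close> by (simp_all add: bij_is_inj)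
    ultimately have "\<bar>j\<bar> \<le> M * M"
      using \<open>0 \<le> M\<close> assms(2) by (smt (verit) mult_left_mono)
    with that show False by (simp add: K_def)
  qed
  have "0 \<le> K" using \<open>0 \<le> M\<close> by (simp add: K_def)
  have right: "0 < P j \<longleftrightarrow> 0 < P (K + 1)" if "K < j" for j
  proof (rule coarse_lipschitz_sign_persists [OF lip(1)])
    show "M < \<bar>P i\<bar>" if "K + 1 \<le> i" for i
      using that by (intro far) simp
  qed (use that in simp)
  have left: "0 < P j \<longleftrightarrow> 0 < P (- K - 1)" if "j < - K" for j
  proof -
    have "0 < P (- (- j)) \<longleftrightarrow> 0 < P (- (K + 1))"
    proof (rule coarse_lipschitz_sign_persists [OF coarse_lipschitz_reflect [OF lip(1)]])
      show "M < \<bar>P (- i)\<bar>" if "K + 1 \<le> i" for i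
        using that \<open>0 \<le> K\<close> by (intro far) simp
    qed (use that in simp)
    then show ?thesis by simp
  qed
  have nonzero: "P j \<noteq> 0" if "K < \<bar>j\<bar>" for j
    using far [OF that] \<open>0 \<le> M\<close> by auto
  have "\<not> (0 < P (K + 1) \<longleftrightarrow> 0 < P (- K - 1))"
  proof
    assume same: "0 < P (K + 1) \<longleftrightarrow> 0 < P (- K - 1)"
    define S :: "int set" where "S = (if 0 < P (K + 1) then {0<..} else {..<0})"
    have "P j \<in> S" if "K < \<bar>j\<bar>" for j
    proof -
      have "0 < P j \<longleftrightarrow> 0 < P (K + 1)"
        using that right [of j] left [of j] same by linarith
      then show ?thesis
        using nonzero [OF that] by (auto simp: S_def)
    qed
    then have "finite (- S)"
      using finite_Compl_if_surj_tails \<open>bij P\<close> bij_is_surj by blast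
    moreover have "- S = (if 0 < P (K + 1) then {..0} else {0..})"
      by (auto simp: S_def)
    ultimately show False
      using infinite_Iic infinite_Ici by (metis (full_types))
  qed
  then have "0 < P (K + 1) \<and> P (- K - 1) < 0 \<or> P (K + 1) < 0 \<and> 0 < P (- K - 1)"
    using nonzero [of "K + 1"] nonzero [of "- K - 1"] \<open>0 \<le> K\<close> by auto
  moreover have "0 < P j \<longleftrightarrow> 0 < P (K + 1)" "P j \<noteq> 0" if "K < j" for j
    using that right [of j] nonzero [of j] by auto
  moreover have "0 < P j \<longleftrightarrow> 0 < P (- K - 1)" "P j \<noteq> 0" if "j < - K" for j
    using that left [of j] nonzero [of j] by auto
  ultimately show ?thesis
    unfolding sign_pattern_def K_def [symmetric] zflip_def comp_def
    by (smt (verit))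
qed

section \<open>Locally constant maps and minimal actions\<close>

lemma homeomorphism_open_image: "homeomorphism UNIV UNIV f g \<Longrightarrow> open V \<Longrightarrow> open (f ` V)"
  using homeomorphism_imp_open_map [of UNIV UNIV f g V] by simp

lemma cont_to_dinf_const: "cont_to_dinf (\<lambda>x. a)"
  by (simp add: cont_to_dinf_def)

lemma cont_to_dinf_compose:
  assumes "continuous_on UNIV h" "cont_to_dinf f"
  shows "cont_to_dinf (\<lambda>x. f (h x))"
  using assms open_vimage unfolding cont_to_dinf_def vimage_def by fastforce

lemma cont_to_dinf_dep:
  assumes "\<And>a. cont_to_dinf (F a)" "cont_to_dinf f"
  shows "cont_to_dinf (\<lambda>x. F (f x) x)"
  unfolding cont_to_dinf_def
proof
  fix b
  have "{x. F (f x) x = b} = (\<Union>a. {x. f x = a} \<inter> {x. F a x = b})"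
    by auto
  moreover have "open (\<Union>a. {x. f x = a} \<inter> {x. F a x = b})"
    using assms unfolding cont_to_dinf_def by (intro open_UN open_Int) auto
  ultimately show "open {x. F (f x) x = b}"
    by simp
qed

lemma cont_to_dinf_apply2:
  assumes "cont_to_dinf f" "cont_to_dinf g"
  shows "cont_to_dinf (\<lambda>x. H (f x) (g x))"
proof (rule cont_to_dinf_dep [of "\<lambda>a x. H a (g x)", OF _ assms(1)])
  show "cont_to_dinf (\<lambda>x. H a (g x))" for a
    using cont_to_dinf_dep [of "\<lambda>b x. H a b", OF cont_to_dinf_const assms(2)] .
qed

lemma cont_to_dinf_finite_range:
  assumes "compact (UNIV :: 'x::topological_space set)" "cont_to_dinf (f :: 'x \<Rightarrow> dinf)"
  shows "finite (range f)"
proof -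
  obtain H where "finite H" "UNIV \<subseteq> (\<Union>h\<in>H. {x. f x = h})"
    by (rule compactE_image [OF assms(1), of "range f" "\<lambda>h. {x. f x = h}"])
      (use assms(2) in \<open>auto simp: cont_to_dinf_def\<close>)
  then have "range f \<subseteq> H"
    by blast
  then show ?thesis
    using \<open>finite H\<close> by (rule finite_subset)
qed

lemma cont_to_dinf_if_locally_determined:
  assumes "finite J" "\<And>j. j \<in> J \<Longrightarrow> cont_to_dinf (F j)"
    and "\<And>x y. \<forall>j \<in> J. F j x = F j y \<Longrightarrow> G x = G y"
  shows "cont_to_dinf G"
  unfolding cont_to_dinf_def
proof
  fix h
  have "{x. G x = h} = (\<Union>y \<in> {x. G x = h}. \<Inter>j \<in> J. {x. F j x = F j y})"
    using assms(3) by auto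
  moreover have "open (\<Inter>j \<in> J. {x. F j x = F j y})" for y
    using assms(1,2) unfolding cont_to_dinf_def by auto
  ultimately show "open {x. G x = h}"
    by (metis (no_types, lifting) open_UN)
qed

lemma
  assumes "cont_action a"
  shows cont_action_dunit [simp]: "a dunit x = x"
    and cont_action_dmul: "a (dmul g h) x = a g (a h x)"
    and cont_action_continuous: "continuous_on UNIV (a g)"
  using assms by (simp_all add: cont_action_def)

lemma cont_action_dinv [simp]: "cont_action a \<Longrightarrow> a (dinv g) (a g x) = x"
  by (metis cont_action_dmul cont_action_dunit dmul_dinv_left)

lemma cont_action_open_image:
  assumes "cont_action a" "open V"
  shows "open (a g ` V)"
proof -
  have "a g ` V = a (dinv g) -` V"
    using assms(1) by (auto simp: image_iff) (metis cont_action_dinv dinv_dinv)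
  with assms show ?thesis
    using open_vimage cont_action_continuous by metis
qed

lemma minimal_actionD: "minimal_action a \<Longrightarrow> closure (range (\<lambda>g. a g x)) = UNIV"
  unfolding minimal_on_def by (simp add: full_SetCompr_eq)

lemma minimal_action_orbit_meets:
  assumes "minimal_action a" "open V" "V \<noteq> {}"
  obtains g where "a g x \<in> V"
proof -
  have "range (\<lambda>g. a g x) \<inter> V \<noteq> {}"
  proof
    assume "range (\<lambda>g. a g x) \<inter> V = {}"
    then have "closure (range (\<lambda>g. a g x)) \<subseteq> - V"
      using assms(2) by (intro closure_minimal) auto
    with minimal_actionD [OF assms(1)] assms(3) show False
      by auto
  qed
  with that show ?thesis
    by blast
qed

lemma minimal_action_orbit_infinite:
  fixes a :: "dinf \<Rightarrow> 'x::t1_space \<Rightarrow> 'x"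
  assumes "infinite (UNIV :: 'x set)" "minimal_action a"
  shows "infinite (range (\<lambda>g. a g x))"
  using assms minimal_actionD [OF assms(2), of x] by (metis closure_closed finite_imp_closed)

lemma minimal_action_no_isolated_point:
  fixes a :: "dinf \<Rightarrow> 'x::topological_space \<Rightarrow> 'x" and x :: 'x
  assumes "compact (UNIV :: 'x set)" "infinite (UNIV :: 'x set)"
    and "cont_action a" "minimal_action a"
  shows "\<not> open {x}"
proof
  assume "open {x}"
  have isolated: "open {z}" for z :: 'x
  proof -
    obtain g where "a g z \<in> {x}"
      using minimal_action_orbit_meets [OF assms(4) \<open>open {x}\<close>] by blast
    then have "{z} = a (dinv g) ` {x}"
      using assms(3) by auto
    then show ?thesis
      using cont_action_open_image [OF assms(3) \<open>open {x}\<close>] by simp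
  qed
  obtain C :: "'x set" where "finite C" "UNIV \<subseteq> (\<Union>z\<in>C. {z})"
  proof (rule compactE_image [OF assms(1), of UNIV "\<lambda>z. {z}"])
    show "UNIV \<subseteq> (\<Union>z\<in>UNIV. {z :: 'x})"
      by blast
  qed (auto intro: isolated that)
  with assms(2) show False
    using finite_subset by auto
qed

lemma locally_constant_invariant_const:
  fixes a :: "dinf \<Rightarrow> 'x::topological_space \<Rightarrow> 'x" and k :: "'x \<Rightarrow> 'b"
  assumes "minimal_action a" "\<And>n. open {x. k x = n}" "\<And>g x. k (a g x) = k x"
  shows "k x = k y"
proof -
  have "- {z. k z = k y} = (\<Union>z \<in> - {z. k z = k y}. {x. k x = k z})"
    by auto
  also have "open \<dots>"
    by (intro open_UN ballI assms(2))
  finally have "closed {z. k z = k y}"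
    unfolding closed_def .
  moreover have "range (\<lambda>g. a g y) \<subseteq> {z. k z = k y}"
    using assms(3) by auto
  ultimately have "closure (range (\<lambda>g. a g y)) \<subseteq> {z. k z = k y}"
    by (rule closure_minimal [rotated])
  then show ?thesis
    using minimal_actionD [OF assms(1)] by auto
qed

lemma cont_action_periodic_finite_orbit:
  assumes "cont_action a" "p \<noteq> 0" and periodic: "a (D p False) y = y"
  shows "finite (range (\<lambda>g. a g y))"
proof -
  have multiple: "a (D (k * p) False) y = y" for k
  proof (induction k rule: int_induct [where k = 0])
    case base
    then show ?case using assms(1) by (simp flip: dunit_def)
  next
    case (step1 i)
    have "D ((i + 1) * p) False = dmul (D p False) (D (i * p) False)"
      by (simp add: algebra_simps)
    then show ?case
      using step1 periodic by (simp only: cont_action_dmul [OF assms(1)])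
  next
    case (step2 i)
    have "D ((i - 1) * p) False = dmul (dinv (D p False)) (D (i * p) False)"
      by (simp add: algebra_simps)
    then show ?case
      using step2 cont_action_dinv [OF assms(1), of "D p False" y] periodic
      by (simp only: cont_action_dmul [OF assms(1)])
  qed
  have "a g y \<in> (\<lambda>(j, e). a (D j e) y) ` ({- \<bar>p\<bar>..\<bar>p\<bar>} \<times> UNIV)" for g
  proof -
    obtain m e where g: "g = D m e" by (cases g)
    have "D m e = dmul (D (m mod p) e) (D ((if e then - (m div p) else m div p) * p) False)"
      by (simp add: algebra_simps)
    then have "a g y = a (D (m mod p) e) y"
      unfolding g by (simp only: cont_action_dmul [OF assms(1)] multiple)
    moreover have "m mod p \<in> {- \<bar>p\<bar>..\<bar>p\<bar>}"
      using abs_mod_less [OF assms(2), of m] by (simp add: abs_less_iff)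
    ultimately show ?thesis
      by force
  qed
  then have "range (\<lambda>g. a g y) \<subseteq> (\<lambda>(j, e). a (D j e) y) ` ({- \<bar>p\<bar>..\<bar>p\<bar>} \<times> UNIV)"
    by blast
  then show ?thesis
    by (rule finite_subset) simp
qed

text \<open>A translation \<open>s\<^sup>n\<close> fixing a point would give a finite orbit.  A reflection fixing an open
  set fixes two points \<open>x\<close> and \<open>s\<^sup>j x\<close> of one orbit, and then \<open>s\<^sup>2\<^sup>j\<close> fixes \<open>x\<close>.\<close>
lemma topologically_free:
  fixes a :: "dinf \<Rightarrow> 'x::t1_space \<Rightarrow> 'x"
  assumes "compact (UNIV :: 'x set)" "infinite (UNIV :: 'x set)"
    and "cont_action a" "minimal_action a"
    and "open V" "V \<noteq> {}" and fixes_V: "\<And>z. z \<in> V \<Longrightarrow> a r z = z"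
  shows "r = dunit"
proof (rule ccontr)
  assume "r \<noteq> dunit"
  have aperiodic: "a (D p False) y \<noteq> y" if "p \<noteq> 0" for p y
    using cont_action_periodic_finite_orbit [OF assms(3) that] minimal_action_orbit_infinite [OF assms(2,4)]
    by auto
  obtain x where "x \<in> V" using assms(6) by blast
  obtain n e where r: "r = D n e" by (cases r)
  show False
  proof (cases e)
    case False
    with \<open>r \<noteq> dunit\<close> have "n \<noteq> 0" by (simp add: r dunit_def)
    then show False
      using aperiodic [of n x] fixes_V [OF \<open>x \<in> V\<close>] by (simp add: r False)
  next
    case True
    have reflection: "a (D m True) x = a (D (m - n) False) x" for m
      using cont_action_dmul [OF assms(3), of "D (m - n) False" r x] fixes_V \<open>x \<in> V\<close> by (simp add: r True)
    have "\<not> open {x}"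
      using minimal_action_no_isolated_point [OF assms(1-4)] .
    then have "V \<noteq> {x}"
      using assms(5) by auto
    with \<open>x \<in> V\<close> have "V - {x} \<noteq> {}"
      by auto
    then obtain g where g: "a g x \<in> V - {x}"
      by (rule minimal_action_orbit_meets [OF assms(4) open_delete [OF assms(5)]])
    obtain m f where "g = D m f" by (cases g)
    define j where "j = (if f then m - n else m)"
    have "a g x = a (D j False) x"
      using reflection by (simp add: \<open>g = D m f\<close> j_def)
    with g have j: "a (D j False) x \<in> V" "a (D j False) x \<noteq> x"
      by auto
    then have "j \<noteq> 0"
      using assms(3) by (auto simp flip: dunit_def)
    have "a (D (n - j) True) x = a (D j False) x"
      using fixes_V [OF j(1)] cont_action_dmul [OF assms(3), of r "D j False" x] by (simp add: r True)
    then have "a (D (- j) False) x = a (D j False) x"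
      using reflection [of "n - j"] by simp
    have "D (2 * j) False = dmul (D j False) (D j False)"
      by simp
    then have "a (D (2 * j) False) x = a (D j False) (a (D j False) x)"
      by (simp only: cont_action_dmul [OF assms(3)])
    also have "\<dots> = a (D j False) (a (D (- j) False) x)"
      by (simp add: \<open>a (D (- j) False) x = a (D j False) x\<close>)
    also have "\<dots> = x"
      using cont_action_dmul [OF assms(3), of "D j False" "D (- j) False" x] assms(3)
      by (simp flip: dunit_def)
    finally have "a (D (2 * j) False) x = x" .
    with aperiodic [of "2 * j" x] \<open>j \<noteq> 0\<close> show False
      by simp
  qed
qed

section \<open>Orbit cocycles\<close>

definition zcocycle :: "(dinf \<Rightarrow> 'x \<Rightarrow> dinf) \<Rightarrow> 'x \<Rightarrow> int \<Rightarrow> int" where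
  "zcocycle c x j = zindex (c (of_zindex j) x)"

lemma zcocycle_coarse_lipschitz:
  fixes a :: "dinf \<Rightarrow> 'x::topological_space \<Rightarrow> 'x"
  assumes "compact (UNIV :: 'x set)" "cont_cocycle c"
    and cocycle: "\<And>h g x. c (dmul h g) x = dmul (c h (a g x)) (c g x)"
  obtains M where "\<And>x. coarse_lipschitz M (zcocycle c x)"
proof
  define B where "B = Max ((\<lambda>h. \<bar>zindex h\<bar>) ` (range (c dt) \<union> range (c (D 1 True))))"
  have fin: "finite (range (c dt) \<union> range (c (D 1 True)))"
    using assms(1,2) by (simp add: cont_cocycle_def cont_to_dinf_finite_range)
  show "coarse_lipschitz B (zcocycle c x)" for x
    unfolding coarse_lipschitz_def
  proof
    fix j
    obtain r where r: "r \<in> {dt, D 1 True}" "of_zindex (j + 1) = dmul r (of_zindex j)"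
      using of_zindex_succ by blast
    have "\<bar>zcocycle c x (j + 1) - zcocycle c x j\<bar> = \<bar>zindex (c r (a (of_zindex j) x))\<bar>"
      by (simp add: zcocycle_def r(2) cocycle zindex_dmul_dist)
    also have "\<dots> \<le> B"
      unfolding B_def using r(1) fin by (intro Max_ge) auto
    finally show "\<bar>zcocycle c x (j + 1) - zcocycle c x j\<bar> \<le> B" .
  qed
qed

lemma coarse_bij_zcocycle:
  assumes "coarse_lipschitz M (zcocycle c x)" "coarse_lipschitz M (zcocycle c' y)"
    and "\<And>h. c (c' h y) x = h" "\<And>g. c' (c g x) y = g"
  shows "coarse_bij M (zcocycle c x)"
proof -
  have "zcocycle c x (zcocycle c' y j) = j" "zcocycle c' y (zcocycle c x j) = j" for j
    using assms(3,4) by (simp_all add: zcocycle_def)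
  then have "bij (zcocycle c x)" "inv (zcocycle c x) = zcocycle c' y"
    by (auto intro: bij_betw_byWitness inv_equality)
  with assms(1,2) show ?thesis
    by (simp add: coarse_bij_def)
qed

lemma zcocycle_action:
  assumes cocycle: "\<And>h g x. c (dmul h g) x = dmul (c h (a g x)) (c g x)"
  shows "zcocycle c (a g x) = zmap (c g x) \<circ> zcocycle c x \<circ> zmap (dinv g)"
proof
  fix j
  have "c (of_zindex j) (a g x) = dmul (c (dmul (of_zindex j) g) x) (dinv (c g x))"
    by (simp add: cocycle dmul_assoc)
  moreover have "dmul (of_zindex j) g = of_zindex (zmap (dinv g) j)"
    by (metis of_zindex_zindex zindex_dmul zindex_of_zindex)
  ultimately show "zcocycle c (a g x) j = (zmap (c g x) \<circ> zcocycle c x \<circ> zmap (dinv g)) j"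
    by (simp add: zcocycle_def zindex_dmul)
qed

lemma cocycle_dunit:
  assumes "cont_action a" "\<And>h g x. c (dmul h g) x = dmul (c h (a g x)) (c g x)"
  shows "c dunit x = dunit"
proof -
  have "dmul (c dunit x) (c dunit x) = c dunit x"
    using assms(2) [of dunit dunit x] assms(1) by simp
  then show ?thesis
    by (simp add: dmul_idem_iff)
qed

locale orbit_cocycle =
  fixes a :: "dinf \<Rightarrow> 'x::topological_space \<Rightarrow> 'x" and b :: "dinf \<Rightarrow> 'y::t1_space \<Rightarrow> 'y"
    and \<psi> :: "'x \<Rightarrow> 'y" and c :: "dinf \<Rightarrow> 'x \<Rightarrow> dinf"
  assumes compact: "compact (UNIV :: 'y set)" and infinite: "infinite (UNIV :: 'y set)"
    and action_a: "cont_action a" and action_b: "cont_action b" and minimal_b: "minimal_action b"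
    and open_map: "\<And>V. open V \<Longrightarrow> open (\<psi> ` V)"
    and cont_c: "cont_cocycle c"
    and orbit_eq: "\<And>g x. \<psi> (a g x) = b (c g x) (\<psi> x)"
begin

text \<open>Topological freeness of \<open>b\<close> makes an orbit cocycle unique.\<close>
lemma cocycle_unique:
  assumes "cont_to_dinf u" "cont_to_dinf v" "\<And>x. b (u x) (\<psi> x) = b (v x) (\<psi> x)"
  shows "u x = v x"
proof -
  define w where "w x = dmul (dinv (v x)) (u x)" for x
  have "cont_to_dinf w"
    unfolding w_def using assms(1,2) by (rule cont_to_dinf_apply2)
  then have "open (\<psi> ` {y. w y = w x})"
    by (simp add: open_map cont_to_dinf_def)
  moreover have "b (w x) z = z" if "z \<in> \<psi> ` {y. w y = w x}" for z
  proof -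
    from that obtain y where "w y = w x" "z = \<psi> y"
      by blast
    moreover have "b (w y) (\<psi> y) = \<psi> y"
      using assms(3) action_b by (simp add: w_def cont_action_dmul)
    ultimately show ?thesis
      by simp
  qed
  ultimately have "w x = dunit"
    using topologically_free [OF compact infinite action_b minimal_b] by blast
  then show ?thesis
    by (simp add: w_def) (metis dmul_dinv_cancel_left dmul_dunit_right)
qed

lemma cont_to_dinf_c: "cont_to_dinf (c g)"
  using cont_c by (simp add: cont_cocycle_def)

lemma cocycle: "c (dmul h g) x = dmul (c h (a g x)) (c g x)"
proof (rule cocycle_unique)
  show "cont_to_dinf (\<lambda>x. dmul (c h (a g x)) (c g x))"
    using cont_to_dinf_compose [OF cont_action_continuous [OF action_a] cont_to_dinf_c]
    by (rule cont_to_dinf_apply2) (rule cont_to_dinf_c)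
  show "b (c (dmul h g) x) (\<psi> x) = b (dmul (c h (a g x)) (c g x)) (\<psi> x)" for x
    using action_a action_b by (simp add: cont_action_dmul flip: orbit_eq)
qed (rule cont_to_dinf_c)

lemma cocycle_inverse:
  assumes "homeomorphism UNIV UNIV \<psi> \<psi>'" "cont_cocycle c'"
    and orbit_eq': "\<And>g y. \<psi>' (b g y) = a (c' g y) (\<psi>' y)"
  shows "c (c' h (\<psi> x)) x = h"
proof (rule cocycle_unique [where v = "\<lambda>_. h"])
  have "continuous_on UNIV \<psi>"
    using assms(1) by (simp add: homeomorphism_def)
  then have "cont_to_dinf (\<lambda>x. c' h (\<psi> x))"
    using assms(2) by (simp add: cont_to_dinf_compose cont_cocycle_def)
  then show "cont_to_dinf (\<lambda>x. c (c' h (\<psi> x)) x)"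
    by (rule cont_to_dinf_dep [OF cont_to_dinf_c])
  have "\<psi>' (\<psi> x) = x" "\<psi> (\<psi>' y) = y" for x y
    using assms(1) by (simp_all add: homeomorphism_def)
  then show "b (c (c' h (\<psi> x)) x) (\<psi> x) = b h (\<psi> x)" for x
    by (metis orbit_eq orbit_eq')
qed (rule cont_to_dinf_const)

end

lemma zcocycle_normalization:
  fixes a :: "dinf \<Rightarrow> 'x::topological_space \<Rightarrow> 'x"
  assumes "cont_action a" "cont_cocycle c"
    and cocycle: "\<And>h g x. c (dmul h g) x = dmul (c h (a g x)) (c g x)"
    and coarse: "\<And>x. coarse_bij M (zcocycle c x)"
  obtains L k where "cont_to_dinf L"
    and "\<And>g x. dmul (L (a g x)) (dmul (c g x) (dinv (L x))) = phik (k x) g"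
    and "\<And>g x. k (a g x) = k x"
proof -
  define K where "K = M * M"
  define L where "L x = normalizer K (zcocycle c x)" for x
  define k where "k x = - end_index (zmap (L x) \<circ> zcocycle c x)" for x
  have "0 \<le> K"
    using coarse by (simp add: K_def coarse_bij_def)
  have "cont_to_dinf L"
  proof (rule cont_to_dinf_if_locally_determined [of "{- K..K + 1}" "\<lambda>j. c (of_zindex j)"])
    show "L x = L y" if "\<forall>j \<in> {- K..K + 1}. c (of_zindex j) x = c (of_zindex j) y" for x y
      unfolding L_def using \<open>0 \<le> K\<close> that by (intro normalizer_cong) (simp_all add: zcocycle_def)
  qed (use assms(2) in \<open>simp_all add: cont_cocycle_def\<close>)
  moreover have normalized: "normalized (zmap (L x) \<circ> zcocycle c x)" for x
  proof -
    have "zcocycle c x 0 = 0"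
      using cocycle_dunit [of a c, OF assms(1) cocycle]
      by (simp add: zcocycle_def of_zindex_0 zindex_def dunit_def)
    then have "sign_pattern K (zcocycle c x) \<or> sign_pattern K (zflip \<circ> zcocycle c x)"
      using coarse_bij_sign_pattern [OF coarse] unfolding K_def by blast
    then show ?thesis
      using coarse by (simp add: L_def normalized_normalizer coarse_bij_def)
  qed
  moreover have "dmul (L (a g x)) (dmul (c g x) (dinv (L x))) = phik (k x) g \<and> k (a g x) = k x" for g x
  proof -
    have conj: "zmap (L (a g x)) \<circ> zcocycle c (a g x) =
        zmap (dmul (L (a g x)) (dmul (c g x) (dinv (L x)))) \<circ> (zmap (L x) \<circ> zcocycle c x) \<circ> zmap (dinv g)"
      by (simp add: zcocycle_action [of c a, OF cocycle] zmap_dmul comp_assoc zmap_dinv_comp)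
    from normalized_zmap_conj [OF normalized normalized [of "a g x", unfolded conj]] show ?thesis
      unfolding k_def conj by simp
  qed
  ultimately show ?thesis
    by (intro that [of L k]) auto
qed

lemma cocycle_cohomologous_to_phik:
  fixes a :: "dinf \<Rightarrow> 'x::topological_space \<Rightarrow> 'x"
  assumes "cont_action a" "minimal_action a" "cont_cocycle c"
    and cocycle: "\<And>h g x. c (dmul h g) x = dmul (c h (a g x)) (c g x)"
    and coarse: "\<And>x. coarse_bij M (zcocycle c x)"
  shows "\<exists>L k. cont_to_dinf L \<and> (\<forall>g x. c g x = dmul (dinv (L (a g x))) (dmul (phik k g) (L x)))"
proof -
  obtain L k where L: "cont_to_dinf L"
    and twisted: "\<And>g x. dmul (L (a g x)) (dmul (c g x) (dinv (L x))) = phik (k x) g"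
    and invariant: "\<And>g x. k (a g x) = k x"
    using zcocycle_normalization [of a c, OF assms(1,3) cocycle coarse] by blast
  have "cont_to_dinf (\<lambda>x. dmul (c dt x) (dinv (L x)))"
    using assms(3) L by (intro cont_to_dinf_apply2 [of "c dt" L "\<lambda>u v. dmul u (dinv v)"])
      (simp_all add: cont_cocycle_def)
  then have "cont_to_dinf (\<lambda>x. dmul (L (a dt x)) (dmul (c dt x) (dinv (L x))))"
    using cont_to_dinf_compose [OF cont_action_continuous [OF assms(1)] L]
    by (intro cont_to_dinf_apply2 [of "\<lambda>x. L (a dt x)" _ dmul])
  moreover have "{x. k x = n} = {x. dmul (L (a dt x)) (dmul (c dt x) (dinv (L x))) = D n True}" for n
    by (simp add: twisted dt_def)
  ultimately have "open {x. k x = n}" for n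
    by (simp add: cont_to_dinf_def)
  then have k_constant: "k x = k y" for x y
    by (rule locally_constant_invariant_const [of a k, OF assms(2) _ invariant])
  have "c g x = dmul (dinv (L (a g x))) (dmul (phik (k y) g) (L x))" for g x y
    using twisted [of g x] k_constant [of x y] by (simp add: dmul_conj_eq_iff)
  with L show ?thesis
    by (intro exI [of _ L] exI [of _ "k undefined"]) simp
qed

lemma orbit_equivalence_coarse_bij:
  fixes a :: "dinf \<Rightarrow> 'x::t1_space \<Rightarrow> 'x" and b :: "dinf \<Rightarrow> 'y::t1_space \<Rightarrow> 'y"
  assumes "orbit_cocycle a b \<psi> c" "orbit_cocycle b a \<psi>' c'" "homeomorphism UNIV UNIV \<psi> \<psi>'"
    and "compact (UNIV :: 'x set)" "compact (UNIV :: 'y set)"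
  obtains M where "\<And>x. coarse_bij M (zcocycle c x)"
proof -
  interpret forward: orbit_cocycle a b \<psi> c by fact
  interpret backward: orbit_cocycle b a \<psi>' c' by fact
  obtain M1 where M1: "\<And>x. coarse_lipschitz M1 (zcocycle c x)"
    using zcocycle_coarse_lipschitz [where a = a and c = c, OF assms(4) forward.cont_c forward.cocycle] by blast
  obtain M2 where M2: "\<And>y. coarse_lipschitz M2 (zcocycle c' y)"
    using zcocycle_coarse_lipschitz [where a = b and c = c', OF assms(5) backward.cont_c backward.cocycle] by blast
  have right_inverse: "c (c' h (\<psi> x)) x = h" for h x
    using assms(3) backward.cont_c backward.orbit_eq by (rule forward.cocycle_inverse)
  have "c' (c g (\<psi>' y)) y = g" for g y
    using homeomorphism_symD [OF assms(3)] forward.cont_c forward.orbit_eq by (rule backward.cocycle_inverse)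
  moreover have "\<psi>' (\<psi> x) = x" for x
    using assms(3) by (simp add: homeomorphism_def)
  ultimately have "c' (c g x) (\<psi> x) = g" for g x
    by metis
  with right_inverse have "coarse_bij (max M1 M2) (zcocycle c x)" for x
    by (intro coarse_bij_zcocycle [where c' = c' and y = "\<psi> x"])
      (auto intro: coarse_lipschitz_mono [OF M1] coarse_lipschitz_mono [OF M2])
  with that show ?thesis
    by blast
qed

theorem mainTheorem10:
  fixes \<alpha> \<beta> :: "dinf \<Rightarrow> 'x::t2_space \<Rightarrow> 'x"
    and \<phi> :: "'x \<Rightarrow> 'x" and c :: "dinf \<Rightarrow> 'x \<Rightarrow> dinf"
  assumes "compact (UNIV :: 'x set)" and "infinite (UNIV :: 'x set)"
    and "cont_action \<alpha>" and "cont_action \<beta>"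
    and "minimal_action \<alpha>" and "minimal_action \<beta>"
    and "coe_via \<alpha> \<beta> \<phi> c"
    and "minimal_on sgrp \<alpha>"
  shows "\<exists>L' :: 'x \<Rightarrow> dinf. \<exists>k :: int. cont_to_dinf L' \<and>
           (\<forall>g x. c g x = dmul (dinv (L' (\<alpha> g x))) (dmul (phik k g) (L' x)))"
proof -
  have hom: "homeomorphism UNIV UNIV \<phi> (inv \<phi>)" and "cont_cocycle c"
    and orbit: "\<And>g x. \<phi> (\<alpha> g x) = \<beta> (c g x) (\<phi> x)"
    using assms(7) unfolding coe_via_def by blast+
  obtain c' where "cont_cocycle c'" and orbit': "\<And>g y. inv \<phi> (\<beta> g y) = \<alpha> (c' g y) (inv \<phi> y)"
    using assms(7) unfolding coe_via_def by blast
  have "orbit_cocycle \<alpha> \<beta> \<phi> c"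
  proof
    show "open (\<phi> ` V)" if "open V" for V
      using hom that by (rule homeomorphism_open_image)
  qed (fact assms orbit \<open>cont_cocycle c\<close>)+
  moreover have "orbit_cocycle \<beta> \<alpha> (inv \<phi>) c'"
  proof
    show "open (inv \<phi> ` V)" if "open V" for V
      using homeomorphism_symD [OF hom] that by (rule homeomorphism_open_image)
  qed (fact assms orbit' \<open>cont_cocycle c'\<close>)+
  ultimately obtain M where "\<And>x. coarse_bij M (zcocycle c x)"
    using orbit_equivalence_coarse_bij hom assms(1) by blast
  then show ?thesis
    by (rule cocycle_cohomologous_to_phik [where a = \<alpha> and c = c, OF assms(3,5) \<open>cont_cocycle c\<close>
          orbit_cocycle.cocycle [OF \<open>orbit_cocycle \<alpha> \<beta> \<phi> c\<close>]])
qed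

end
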